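(* Under the standing assumptions below, let $i\in P$ with $M_i\neq 0$. Then there exists $w\in P$ with $w\le i$ such that $D_w\subsetneq M_w$, i.e. $M_w$ contains an indecomposable element.
   Context: Standing assumptions: $R$ is a principal ideal domain; $P$ is a lattice with a compatible abelian group structure ($(P,+,0)$ abelian group, $a\le b\Rightarrow a+c\le b+c$). $U_0=\{s\in P:s\ge 0\}$, $R[U_0]$ the monoid ring (finite sums $\sum c_st^s$, $c_s\in R$), graded by $\deg(ct^s)=s$. $M=\bigoplus_{a\in P}M_a$ is a $P$-graded $R[U_0]$-module (persistence module) that is graded projective, with each $M_a$ a finitely generated $R$-module. For $r\in P$, $D_r=\sum_{q<r}t^{\,r-q}M_q\subseteq M_r$ (sum of the images of the structure maps $M_q\to M_r$ over all $q<r$). An element $x\in M_i$ is decomposable if $x\in D_i$ and indecomposable if $x\in M_i\setminus D_i$. *)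

theory Defs
  imports Main "HOL-Library.Lattice_Algebras"
begin

definition ring_ideal :: "'r::comm_ring_1 set \<Rightarrow> bool" where
  "ring_ideal I \<longleftrightarrow> 0 \<in> I \<and> (\<forall>x\<in>I. \<forall>y\<in>I. x + y \<in> I) \<and> (\<forall>x\<in>I. \<forall>r. r * x \<in> I)"

definition principal_ideal_domain :: "'r::idom itself \<Rightarrow> bool" where
  "principal_ideal_domain _ \<longleftrightarrow>
     (\<forall>I::'r set. ring_ideal I \<longrightarrow> (\<exists>a. I = {r * a | r. True}))"

text \<open>The ambient type 'm is the
  whole module M with R-module structure sc; act s is multiplication by the monomial
  t^s (only meaningful for s \<ge> 0); Mc a is the homogeneous component M_a.
  Since R[U_0] is the monoid ring of U_0 over R, an R[U_0]-module structure is the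
  same as an R-module together with an action of the monoid U_0 by R-linear maps.\<close>

definition graded_module ::
  "('r::comm_ring_1 \<Rightarrow> 'm::ab_group_add \<Rightarrow> 'm) \<Rightarrow> ('p::ordered_ab_group_add \<Rightarrow> 'm \<Rightarrow> 'm)
     \<Rightarrow> ('p \<Rightarrow> 'm set) \<Rightarrow> bool" where
  "graded_module sc act Mc \<longleftrightarrow>
     module sc
   \<and> (\<forall>s. 0 \<le> s \<longrightarrow> module_hom sc sc (act s))
   \<and> (\<forall>x. act 0 x = x)
   \<and> (\<forall>s t x. 0 \<le> s \<longrightarrow> 0 \<le> t \<longrightarrow> act s (act t x) = act (s + t) x)
   \<and> (\<forall>a. module.subspace sc (Mc a))
   \<and> (\<forall>a s. 0 \<le> s \<longrightarrow> act s ` Mc a \<subseteq> Mc (a + s))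
   \<and> module.span sc (\<Union>a. Mc a) = UNIV
   \<and> (\<forall>A x. finite A \<longrightarrow> (\<forall>a\<in>A. x a \<in> Mc a) \<longrightarrow> sum x A = 0 \<longrightarrow> (\<forall>a\<in>A. x a = 0))"

definition graded_hom ::
  "('r::comm_ring_1 \<Rightarrow> 'm::ab_group_add \<Rightarrow> 'm) \<Rightarrow> ('p::ordered_ab_group_add \<Rightarrow> 'm \<Rightarrow> 'm) \<Rightarrow> ('p \<Rightarrow> 'm set)
    \<Rightarrow> ('r \<Rightarrow> 'n::ab_group_add \<Rightarrow> 'n) \<Rightarrow> ('p \<Rightarrow> 'n \<Rightarrow> 'n) \<Rightarrow> ('p \<Rightarrow> 'n set)
    \<Rightarrow> ('m \<Rightarrow> 'n) \<Rightarrow> bool" where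
  "graded_hom sc1 act1 M1 sc2 act2 M2 g \<longleftrightarrow>
     module_hom sc1 sc2 g
   \<and> (\<forall>s x. 0 \<le> s \<longrightarrow> g (act1 s x) = act2 s (g x))
   \<and> (\<forall>a. g ` M1 a \<subseteq> M2 a)"

text \<open>Graded free R[U_0]-module: there is a set B of homogeneous elements
  (b of degree d b) which is an R[U_0]-basis, i.e. the elements t^s b
  (b \<in> B, s \<ge> 0), indexed injectively, form an R-basis.\<close>

definition graded_free ::
  "('r::comm_ring_1 \<Rightarrow> 'm::ab_group_add \<Rightarrow> 'm) \<Rightarrow> ('p::ordered_ab_group_add \<Rightarrow> 'm \<Rightarrow> 'm)
     \<Rightarrow> ('p \<Rightarrow> 'm set) \<Rightarrow> bool" where
  "graded_free sc act Mc \<longleftrightarrow> graded_module sc act Mc \<and>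
     (\<exists>B d. (\<forall>b\<in>B. b \<in> Mc (d b))
        \<and> inj_on (\<lambda>(b, s). act s b) {(b, s). b \<in> B \<and> 0 \<le> s}
        \<and> module.independent sc ((\<lambda>(b, s). act s b) ` {(b, s). b \<in> B \<and> 0 \<le> s})
        \<and> module.span sc ((\<lambda>(b, s). act s b) ` {(b, s). b \<in> B \<and> 0 \<le> s}) = UNIV)"

text \<open>Graded projective: a direct summand (in the category of graded R[U_0]-modules)
  of a graded free module, whose elements live in some type 'f.\<close>

definition graded_projective ::
  "'f::ab_group_add itself \<Rightarrow> ('r::comm_ring_1 \<Rightarrow> 'm::ab_group_add \<Rightarrow> 'm)
     \<Rightarrow> ('p::ordered_ab_group_add \<Rightarrow> 'm \<Rightarrow> 'm) \<Rightarrow> ('p \<Rightarrow> 'm set) \<Rightarrow> bool" where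
  "graded_projective _ sc act Mc \<longleftrightarrow> graded_module sc act Mc \<and>
     (\<exists>(scF :: 'r \<Rightarrow> 'f \<Rightarrow> 'f) actF Fc \<iota> \<pi>.
        graded_free scF actF Fc
      \<and> graded_hom sc act Mc scF actF Fc \<iota>
      \<and> graded_hom scF actF Fc sc act Mc \<pi>
      \<and> (\<forall>x. \<pi> (\<iota> x) = x))"

definition decomposable_part ::
  "('r::comm_ring_1 \<Rightarrow> 'm::ab_group_add \<Rightarrow> 'm) \<Rightarrow> ('p::ordered_ab_group_add \<Rightarrow> 'm \<Rightarrow> 'm)
     \<Rightarrow> ('p \<Rightarrow> 'm set) \<Rightarrow> 'p \<Rightarrow> 'm set" where
  "decomposable_part sc act Mc r = module.span sc (\<Union>q\<in>{q. q < r}. act (r - q) ` Mc q)"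

definition decomposable where
  "decomposable sc act Mc i x \<longleftrightarrow> x \<in> Mc i \<and> x \<in> decomposable_part sc act Mc i"

definition indecomposable where
  "indecomposable sc act Mc i x \<longleftrightarrow> x \<in> Mc i \<and> x \<notin> decomposable_part sc act Mc i"

end

theory Submission
  imports Defs
begin

(* Suppose M_w = D_w for every w <= i, and realise M as a graded retract (iota, pi) of a free
   module F with basis vectors t^s b, where b runs over homogeneous generators.  For a basis vector
   e = t^s b with deg b <= i, pi b lies in M_(deg b) = D_(deg b), so iota (pi e) is a combination of
   basis vectors whose generators have degree strictly below deg b.  Now take 0 <> x in M_i: the
   expansion of y = iota x involves only generators of degree <= i, and y = iota (pi y) lies in the
   span of basis vectors whose generator degree is below that of some vector of the support of y.
   A support vector of maximal generator degree contradicts this, so y = 0 and x = pi y = 0. *)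

lemma graded_module_span_homogeneous:
  fixes sc :: "'r::comm_ring_1 \<Rightarrow> 'm::ab_group_add \<Rightarrow> 'm"
    and act :: "'p::ordered_ab_group_add \<Rightarrow> 'm \<Rightarrow> 'm"
  assumes graded: "graded_module sc act M"
    and homogeneous: "\<forall>a\<in>G. a \<in> M (deg a)"
    and z: "z \<in> module.span sc G" and zq: "z \<in> M q"
  shows "z \<in> module.span sc {a\<in>G. deg a = q}"
proof -
  interpret module sc
    using graded by (simp add: graded_module_def)
  have sub: "\<And>a. subspace (M a)"
    and direct: "\<And>A x. finite A \<Longrightarrow> (\<forall>a\<in>A. x a \<in> M a) \<Longrightarrow> sum x A = 0 \<Longrightarrow>
                          (\<forall>a\<in>A. x a = 0)"
    using graded by (simp_all add: graded_module_def)
  obtain t c where t: "finite t" "t \<subseteq> G" and zt: "z = (\<Sum>a\<in>t. sc (c a) a)"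
    using z unfolding span_explicit by blast
  define part where "part p = (\<Sum>a\<in>{a\<in>t. deg a = p}. sc (c a) a)" for p
  define A where "A = insert q (deg ` t)"
  have finA: "finite A"
    using t by (simp add: A_def)
  have part_in: "part p \<in> M p" for p
    unfolding part_def
    by (rule subspace_sum[OF sub]) (use t homogeneous in \<open>auto intro: subspace_scale[OF sub]\<close>)
  have sum_part: "(\<Sum>p\<in>A. part p) = z"
    unfolding part_def zt by (rule sum.group[OF t(1) finA]) (auto simp: A_def)
  define diff where "diff p = part p - (if p = q then z else 0)" for p
  have "(\<Sum>p\<in>A. diff p) = 0"
    unfolding diff_def sum_subtractf sum_part using sum.delta[OF finA, of q "\<lambda>_. z"]
    by (simp add: A_def)
  moreover have "\<forall>p\<in>A. diff p \<in> M p"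
    using part_in zq subspace_diff[OF sub] subspace_0[OF sub] by (simp add: diff_def)
  moreover have "q \<in> A"
    by (simp add: A_def)
  ultimately have "diff q = 0"
    using direct[OF finA, of diff] by blast
  then have "z = part q"
    by (simp add: diff_def)
  also have "part q \<in> span {a\<in>G. deg a = q}"
    unfolding part_def by (intro span_sum span_scale span_base) (use t in auto)
  finally show ?thesis .
qed

lemma decomposable_part_subset:
  fixes sc :: "'r::comm_ring_1 \<Rightarrow> 'm::ab_group_add \<Rightarrow> 'm"
    and act :: "'p::ordered_ab_group_add \<Rightarrow> 'm \<Rightarrow> 'm"
  assumes graded: "graded_module sc act M"
  shows "decomposable_part sc act M w \<subseteq> M w"
proof -
  interpret module sc
    using graded by (simp add: graded_module_def)
  have sub: "subspace (M w)"
    and shift: "\<And>a s. 0 \<le> s \<Longrightarrow> act s ` M a \<subseteq> M (a + s)"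
    using graded by (simp_all add: graded_module_def)
  have "act (w - q) y \<in> M w" if "q < w" "y \<in> M q" for q y
    using shift[of "w - q" q] less_imp_le[OF that(1)] that(2) by auto
  then show ?thesis
    unfolding decomposable_part_def by (intro span_minimal sub) auto
qed

locale graded_free_basis =
  fixes sc :: "'r::comm_ring_1 \<Rightarrow> 'f::ab_group_add \<Rightarrow> 'f"
    and act :: "'p::ordered_ab_group_add \<Rightarrow> 'f \<Rightarrow> 'f"
    and F :: "'p \<Rightarrow> 'f set"
    and B :: "'f set"
    and d :: "'f \<Rightarrow> 'p"
  assumes graded: "graded_module sc act F"
    and generator_degree: "\<forall>b\<in>B. b \<in> F (d b)"
    and inj_basis: "inj_on (\<lambda>(b, s). act s b) {(b, s). b \<in> B \<and> 0 \<le> s}"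
    and independent_basis:
      "module.independent sc ((\<lambda>(b, s). act s b) ` {(b, s). b \<in> B \<and> 0 \<le> s})"
    and span_basis: "module.span sc ((\<lambda>(b, s). act s b) ` {(b, s). b \<in> B \<and> 0 \<le> s}) = UNIV"
begin

sublocale module sc
  using graded by (simp add: graded_module_def)

definition basis_index :: "('f \<times> 'p) set" where
  "basis_index = {(b, s). b \<in> B \<and> 0 \<le> s}"

definition basis_vec :: "'f \<times> 'p \<Rightarrow> 'f" where
  "basis_vec = (\<lambda>(b, s). act s b)"

definition basis_vecs :: "'f set" where
  "basis_vecs = basis_vec ` basis_index"

definition basis_index_of :: "'f \<Rightarrow> 'f \<times> 'p" where
  "basis_index_of = the_inv_into basis_index basis_vec"

definition gen_degree :: "'f \<Rightarrow> 'p" where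
  "gen_degree e = d (fst (basis_index_of e))"

lemma independent_basis_vecs: "independent basis_vecs"
  using independent_basis by (simp add: basis_vecs_def basis_vec_def basis_index_def)

lemma span_basis_vecs [simp]: "span basis_vecs = UNIV"
  using span_basis by (simp add: basis_vecs_def basis_vec_def basis_index_def)

lemma basis_index_of_basis_vec [simp]: "k \<in> basis_index \<Longrightarrow> basis_index_of (basis_vec k) = k"
  unfolding basis_index_of_def
  by (rule the_inv_into_f_f) (use inj_basis in \<open>simp_all add: basis_index_def basis_vec_def\<close>)

lemma gen_degree_basis_vec [simp]: "k \<in> basis_index \<Longrightarrow> gen_degree (basis_vec k) = d (fst k)"
  by (simp add: gen_degree_def)

lemma basis_vec_degree: "k \<in> basis_index \<Longrightarrow> basis_vec k \<in> F (d (fst k) + snd k)"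
  using generator_degree graded
  by (auto simp: basis_index_def basis_vec_def graded_module_def image_subset_iff)

lemma act_basis_vec:
  assumes "0 \<le> u" "k \<in> basis_index"
  shows "act u (basis_vec k) = basis_vec (fst k, u + snd k)" "(fst k, u + snd k) \<in> basis_index"
  using assms graded by (auto simp: basis_index_def basis_vec_def graded_module_def)

lemma homogeneous_in_span_gen_degree_le:
  assumes "z \<in> F q"
  shows "z \<in> span {e\<in>basis_vecs. gen_degree e \<le> q}"
proof -
  define degree where "degree e = d (fst (basis_index_of e)) + snd (basis_index_of e)" for e
  have "z \<in> span {e\<in>basis_vecs. degree e = q}"
  proof (rule graded_module_span_homogeneous[OF graded _ _ assms])
    show "\<forall>e\<in>basis_vecs. e \<in> F (degree e)"
      by (auto simp: basis_vecs_def degree_def basis_vec_degree)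
    show "z \<in> span basis_vecs"
      by simp
  qed
  moreover have "gen_degree e \<le> degree e" if "e \<in> basis_vecs" for e
    using that by (auto simp: basis_vecs_def basis_index_def degree_def gen_degree_def)
  then have "{e\<in>basis_vecs. degree e = q} \<subseteq> {e\<in>basis_vecs. gen_degree e \<le> q}"
    by auto
  ultimately show ?thesis
    using span_mono by blast
qed

lemma act_in_span_gen_degree:
  assumes "0 \<le> u" "z \<in> span {e\<in>basis_vecs. P (gen_degree e)}"
  shows "act u z \<in> span {e\<in>basis_vecs. P (gen_degree e)}"
proof -
  have hom: "module_hom sc sc (act u)"
    using graded assms(1) by (simp add: graded_module_def)
  have "act u ` {e\<in>basis_vecs. P (gen_degree e)} \<subseteq> {e\<in>basis_vecs. P (gen_degree e)}"
  proof (rule image_subsetI)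
    fix e assume "e \<in> {e\<in>basis_vecs. P (gen_degree e)}"
    then obtain k where k: "k \<in> basis_index" "e = basis_vec k" "P (d (fst k))"
      by (auto simp: basis_vecs_def)
    then show "act u e \<in> {e\<in>basis_vecs. P (gen_degree e)}"
      using act_basis_vec[OF assms(1) k(1)] by (auto simp: basis_vecs_def)
  qed
  then have "span (act u ` {e\<in>basis_vecs. P (gen_degree e)})
      \<subseteq> span {e\<in>basis_vecs. P (gen_degree e)}"
    by (rule span_mono)
  then show ?thesis
    using assms(2) module_hom.span_image[OF hom] by blast
qed

lemma representation_gen_degree:
  assumes "z \<in> span {e\<in>basis_vecs. P (gen_degree e)}" "representation basis_vecs z e \<noteq> 0"
  shows "P (gen_degree e)"
proof -
  have "representation basis_vecs z = representation {e\<in>basis_vecs. P (gen_degree e)} z"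
    by (rule representation_extend[OF independent_basis_vecs]) (use assms(1) in auto)
  then have "e \<in> {e\<in>basis_vecs. P (gen_degree e)}"
    using assms(2) by (metis representation_ne_zero)
  then show ?thesis
    by simp
qed

lemma decomposable_part_image_in_span_gen_degree_less:
  fixes scM :: "'r \<Rightarrow> 'm::ab_group_add \<Rightarrow> 'm"
    and actM :: "'p \<Rightarrow> 'm \<Rightarrow> 'm"
  assumes graded_M: "graded_module scM actM M"
    and \<iota>: "graded_hom scM actM M sc act F \<iota>"
  shows "\<iota> ` decomposable_part scM actM M p \<subseteq> span {e\<in>basis_vecs. gen_degree e < p}"
proof -
  interpret M: module scM
    using graded_M by (simp add: graded_module_def)
  have hom: "module_hom scM sc \<iota>"
    and \<iota>_act: "\<And>s x. 0 \<le> s \<Longrightarrow> \<iota> (actM s x) = act s (\<iota> x)"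
    and \<iota>_deg: "\<And>a. \<iota> ` M a \<subseteq> F a"
    using \<iota> by (simp_all add: graded_hom_def)
  have "\<iota> (actM (p - q) y) \<in> span {e\<in>basis_vecs. gen_degree e < p}" if "q < p" "y \<in> M q" for q y
  proof -
    have "\<iota> y \<in> span {e\<in>basis_vecs. gen_degree e \<le> q}"
      using \<iota>_deg that(2) by (intro homogeneous_in_span_gen_degree_le) auto
    moreover have "span {e\<in>basis_vecs. gen_degree e \<le> q} \<subseteq> span {e\<in>basis_vecs. gen_degree e < p}"
      using that(1) by (intro span_mono) (auto intro: le_less_trans)
    ultimately have "\<iota> y \<in> span {e\<in>basis_vecs. gen_degree e < p}"
      by blast
    then have "act (p - q) (\<iota> y) \<in> span {e\<in>basis_vecs. gen_degree e < p}"
      using that(1) by (intro act_in_span_gen_degree[where P = "\<lambda>g. g < p"]) simp_all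
    then show ?thesis
      using \<iota>_act that(1) by simp
  qed
  then have "span (\<iota> ` (\<Union>q\<in>{q. q < p}. actM (p - q) ` M q))
      \<subseteq> span {e\<in>basis_vecs. gen_degree e < p}"
    by (intro span_minimal subspace_span) auto
  then show ?thesis
    unfolding decomposable_part_def module_hom.span_image[OF hom, symmetric] .
qed

lemma retraction_basis_vec_in_span_gen_degree_less:
  fixes scM :: "'r \<Rightarrow> 'm::ab_group_add \<Rightarrow> 'm"
    and actM :: "'p \<Rightarrow> 'm \<Rightarrow> 'm"
  assumes graded_M: "graded_module scM actM M"
    and \<iota>: "graded_hom scM actM M sc act F \<iota>"
    and \<pi>: "graded_hom sc act F scM actM M \<pi>"
    and e: "e \<in> basis_vecs"
    and decomposable: "M (gen_degree e) \<subseteq> decomposable_part scM actM M (gen_degree e)"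
  shows "\<iota> (\<pi> e) \<in> span {e'\<in>basis_vecs. gen_degree e' < gen_degree e}"
proof -
  obtain b s where k: "(b, s) \<in> basis_index" "e = basis_vec (b, s)"
    using e by (auto simp: basis_vecs_def)
  then have b: "b \<in> B" "0 \<le> s"
    by (simp_all add: basis_index_def)
  have gen: "gen_degree e = d b"
    using k by simp
  have \<iota>\<pi>_e: "\<iota> (\<pi> e) = act s (\<iota> (\<pi> b))"
    using \<iota> \<pi> k(2) b(2) by (simp add: basis_vec_def graded_hom_def)
  have "\<pi> b \<in> M (d b)"
    using \<pi> generator_degree b(1) unfolding graded_hom_def by blast
  then have "\<pi> b \<in> decomposable_part scM actM M (d b)"
    using decomposable unfolding gen by blast
  moreover have "\<iota> ` decomposable_part scM actM M (d b)
      \<subseteq> span {e'\<in>basis_vecs. gen_degree e' < d b}"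
    by (rule decomposable_part_image_in_span_gen_degree_less[OF graded_M \<iota>])
  ultimately have "\<iota> (\<pi> b) \<in> span {e'\<in>basis_vecs. gen_degree e' < d b}"
    by blast
  then have "act s (\<iota> (\<pi> b)) \<in> span {e'\<in>basis_vecs. gen_degree e' < d b}"
    by (intro act_in_span_gen_degree[where P = "\<lambda>g. g < d b"] b(2))
  then show ?thesis
    using \<iota>\<pi>_e gen by simp
qed

lemma eq_zero_if_in_span_below_support:
  assumes "y \<in> span {e'\<in>basis_vecs.
             \<exists>e. representation basis_vecs y e \<noteq> 0 \<and> gen_degree e' < gen_degree e}"
  shows "y = 0"
proof (rule ccontr)
  define S where "S = {e. representation basis_vecs y e \<noteq> 0}"
  have "y = (\<Sum>e\<in>S. sc (representation basis_vecs y e) e)"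
    using sum_nonzero_representation_eq[OF independent_basis_vecs, of y] by (simp add: S_def)
  moreover assume "y \<noteq> 0"
  ultimately have "S \<noteq> {}"
    by auto
  then obtain p where p: "p \<in> gen_degree ` S"
    and maximal: "\<forall>q\<in>gen_degree ` S. p \<le> q \<longrightarrow> p = q"
    using finite_has_maximal[of "gen_degree ` S"] finite_representation by (auto simp: S_def)
  then obtain e0 where "e0 \<in> S" "gen_degree e0 = p"
    by blast
  moreover from this(1) have "\<exists>e\<in>S. gen_degree e0 < gen_degree e"
    using representation_gen_degree[where
        P = "\<lambda>g. \<exists>e. representation basis_vecs y e \<noteq> 0 \<and> g < gen_degree e", OF assms]
    by (simp add: S_def)
  ultimately show False
    using maximal by force
qed

lemma retraction_fixed_in_span_below_support:
  fixes scM :: "'r \<Rightarrow> 'm::ab_group_add \<Rightarrow> 'm"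
    and actM :: "'p \<Rightarrow> 'm \<Rightarrow> 'm"
  assumes graded_M: "graded_module scM actM M"
    and \<iota>: "graded_hom scM actM M sc act F \<iota>"
    and \<pi>: "graded_hom sc act F scM actM M \<pi>"
    and decomposable: "\<forall>w\<le>i. M w \<subseteq> decomposable_part scM actM M w"
    and y: "y \<in> F i" and fixed: "\<iota> (\<pi> y) = y"
  shows "y \<in> span {e'\<in>basis_vecs.
           \<exists>e. representation basis_vecs y e \<noteq> 0 \<and> gen_degree e' < gen_degree e}"
    (is "_ \<in> span ?below")
proof -
  define r where "r = representation basis_vecs y"
  define S where "S = {e. r e \<noteq> 0}"
  have S_le: "gen_degree e \<le> i" if "e \<in> S" for e
    using that homogeneous_in_span_gen_degree_le[OF y]
      representation_gen_degree[where P = "\<lambda>g. g \<le> i"]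
    unfolding S_def r_def by blast
  have hom: "module_hom sc sc (\<iota> \<circ> \<pi>)"
    using \<iota> \<pi> by (auto simp: graded_hom_def intro: module_hom_compose)
  have "y = (\<iota> \<circ> \<pi>) (\<Sum>e\<in>S. sc (r e) e)"
    using fixed sum_nonzero_representation_eq[OF independent_basis_vecs, of y]
    by (simp add: S_def r_def)
  also have "\<dots> = (\<Sum>e\<in>S. sc (r e) ((\<iota> \<circ> \<pi>) e))"
    by (simp only: module_hom.sum[OF hom] module_hom.scale[OF hom])
  also have "\<dots> \<in> span ?below"
  proof (intro span_sum span_scale)
    fix e assume e: "e \<in> S"
    then have "e \<in> basis_vecs"
      using representation_ne_zero unfolding S_def r_def by blast
    then have "\<iota> (\<pi> e) \<in> span {e'\<in>basis_vecs. gen_degree e' < gen_degree e}"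
      using retraction_basis_vec_in_span_gen_degree_less[OF graded_M \<iota> \<pi>] decomposable S_le[OF e]
      by blast
    also have "\<dots> \<subseteq> span ?below"
      using e by (intro span_mono) (auto simp: S_def r_def)
    finally show "(\<iota> \<circ> \<pi>) e \<in> span ?below"
      by simp
  qed
  finally show ?thesis .
qed

lemma retract_component_eq_zero:
  fixes scM :: "'r \<Rightarrow> 'm::ab_group_add \<Rightarrow> 'm"
    and actM :: "'p \<Rightarrow> 'm \<Rightarrow> 'm"
  assumes graded_M: "graded_module scM actM M"
    and \<iota>: "graded_hom scM actM M sc act F \<iota>"
    and \<pi>: "graded_hom sc act F scM actM M \<pi>"
    and retract: "\<And>x. \<pi> (\<iota> x) = x"
    and decomposable: "\<forall>w\<le>i. M w \<subseteq> decomposable_part scM actM M w"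
    and x: "x \<in> M i"
  shows "x = 0"
proof -
  have "\<iota> x \<in> F i"
    using \<iota> x unfolding graded_hom_def by blast
  then have "\<iota> x = 0"
    using retraction_fixed_in_span_below_support[OF graded_M \<iota> \<pi> decomposable] retract
    by (intro eq_zero_if_in_span_below_support) simp
  then show ?thesis
    using retract[of x] \<pi> module_hom.zero by (fastforce simp: graded_hom_def)
qed

end

lemma graded_free_basis_exists:
  "graded_free sc act F \<Longrightarrow> \<exists>B d. graded_free_basis sc act F B d"
  by (auto simp: graded_free_def graded_free_basis_def)

lemma graded_projective_component_eq_zero:
  fixes sc :: "'r::comm_ring_1 \<Rightarrow> 'm::ab_group_add \<Rightarrow> 'm"
    and act :: "'p::ordered_ab_group_add \<Rightarrow> 'm \<Rightarrow> 'm"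
  assumes projective: "graded_projective TYPE('f::ab_group_add) sc act M"
    and decomposable: "\<forall>w\<le>i. M w \<subseteq> decomposable_part sc act M w"
    and x: "x \<in> M i"
  shows "x = 0"
proof -
  obtain scF :: "'r \<Rightarrow> 'f \<Rightarrow> 'f" and actF F \<iota> \<pi>
    where free: "graded_free scF actF F"
      and \<iota>: "graded_hom sc act M scF actF F \<iota>" and \<pi>: "graded_hom scF actF F sc act M \<pi>"
      and retract: "\<And>x. \<pi> (\<iota> x) = x"
    using projective unfolding graded_projective_def by blast
  obtain B d where "graded_free_basis scF actF F B d"
    using graded_free_basis_exists[OF free] by blast
  moreover have "graded_module sc act M"
    using projective by (simp add: graded_projective_def)
  ultimately show ?thesis
    using graded_free_basis.retract_component_eq_zero \<iota> \<pi> retract decomposable x by blast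
qed

theorem corollary3p12:
  fixes sc :: "'r::idom \<Rightarrow> 'm::ab_group_add \<Rightarrow> 'm"
    and act :: "'p::lattice_ab_group_add \<Rightarrow> 'm \<Rightarrow> 'm"
    and M :: "'p \<Rightarrow> 'm set"
    and i :: 'p
  assumes "principal_ideal_domain TYPE('r)"
    and "graded_module sc act M"
    and "graded_projective TYPE('f::ab_group_add) sc act M"
    and "\<forall>a. \<exists>S. finite S \<and> S \<subseteq> M a \<and> module.span sc S = M a"
    and "M i \<noteq> {0}"
  shows "\<exists>w\<le>i. decomposable_part sc act M w \<subset> M w \<and> (\<exists>x. indecomposable sc act M w x)"
proof -
  have "0 \<in> M i"
    using assms(2) module.subspace_0 by (fastforce simp: graded_module_def)
  then obtain x where "x \<in> M i" "x \<noteq> 0"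
    using assms(5) by blast
  then obtain w where "w \<le> i" "\<not> M w \<subseteq> decomposable_part sc act M w"
    using graded_projective_component_eq_zero[OF assms(3)] by blast
  then show ?thesis
    using decomposable_part_subset[OF assms(2), of w] by (auto simp: indecomposable_def)
qed

end
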